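(* Let $\alpha\ge\tfrac12$ and $1\le q<\infty$. Then $\|\widehat{\mathbf{1}_{[0,1)}}\|_{\infty,q}<\infty$ if and only if $q>\frac{2(\alpha+1)}{\alpha+3/2}$. In particular $\widehat{\mathbf{1}_{[0,1)}}\in(L^\infty,\ell^2)(\mathbb{R}_+,*_\alpha)$.
   Context: Haar measure $\omega_\alpha(dz)=z^{2\alpha+1}dz$ on $\mathbb{R}_+$. Characters of the Bessel–Kingman hypergroup: $\chi_\lambda(x)=j_\alpha(\lambda x)$ with $j_\alpha(x)=\sum_{k\ge0}\frac{(-1)^k\Gamma(\alpha+1)}{2^{2k}k!\Gamma(\alpha+k+1)}x^{2k}$. Fourier transform: $\hat f(\lambda)=\int_{\mathbb{R}_+}f(x)\chi_\lambda(x)\,d\omega_\alpha(x)$. Let $I_n=[n-1,n)$, $\omega_n=\omega_\alpha(I_n)$, and $\|g\|_{\infty,q}=\big(\sum_{n\ge1}\omega_n\sup_{\lambda\in I_n}|g(\lambda)|^q\big)^{1/q}$; $(L^\infty,\ell^q)(\mathbb{R}_+,*_\alpha)$ is the space of measurable $g$ with $\|g\|_{\infty,q}<\infty$. *)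

theory Defs
  imports "HOL-Analysis.Analysis"
begin

definition bessel_j :: "real \<Rightarrow> real \<Rightarrow> real" where
  "bessel_j a x = (\<Sum>k. ((-1) ^ k * Gamma (a + 1)) /
       (2 ^ (2 * k) * fact k * Gamma (a + real k + 1)) * x ^ (2 * k))"

definition haar :: "real \<Rightarrow> real measure" where
  "haar a = density lborel (\<lambda>z. indicator {0..} z * ennreal (z powr (2 * a + 1)))"

definition bk_fourier :: "real \<Rightarrow> (real \<Rightarrow> real) \<Rightarrow> real \<Rightarrow> real" where
  "bk_fourier a f l = (\<integral>x. f x * bessel_j a (l * x) \<partial>haar a)"

definition I_int :: "nat \<Rightarrow> real set" where
  "I_int n = {real n - 1..<real n}"

definition omega_n :: "real \<Rightarrow> nat \<Rightarrow> real" where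
  "omega_n a n = measure (haar a) (I_int n)"

text \<open>The (nonnegative, extended) quantity sum_{n>=1} omega_n sup_{I_n} |g|^q is finite:
  every local supremum is finite and the series converges.\<close>
definition amalgam_norm_finite :: "real \<Rightarrow> real \<Rightarrow> (real \<Rightarrow> real) \<Rightarrow> bool" where
  "amalgam_norm_finite a q g \<longleftrightarrow>
     (\<forall>n\<ge>1. bdd_above ((\<lambda>l. \<bar>g l\<bar>) ` I_int n)) \<and>
     summable (\<lambda>m. omega_n a (Suc m) * (SUP l\<in>I_int (Suc m). \<bar>g l\<bar>) powr q)"

definition amalgam_space :: "real \<Rightarrow> real \<Rightarrow> (real \<Rightarrow> real) set" where
  "amalgam_space a q = {g. g \<in> borel_measurable borel \<and> amalgam_norm_finite a q g}"

end

theory Submission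
  imports Defs
begin

text \<open>
  Write Y_nu(y^2) = j_nu(y) / Gamma(nu + 1). Since z^(2 alpha + 2) Y_(alpha+1)((l z)^2) is an
  antiderivative of 2 z^(2 alpha + 1) Y_alpha((l z)^2), the transform of the indicator of [0, 1)
  is Gamma(alpha + 1)/2 * Y_(alpha+1)(l^2). The functions P(x) = x^(nu + 1/2) Y_nu(x^2) and
  Q(x) = x^(nu + 3/2) Y_(nu+1)(x^2) / 2 solve P' = beta P/x - Q, Q' = P - beta Q/x with
  beta = nu + 1/2. The modified energy P^2 + Q^2 - 2 beta P Q / x has logarithmic derivative
  O(x^-2), so P^2 + Q^2 stays between two positive constants for large x; and P cannot stay
  small on an interval of length 1/2, since there |Q| is large and P' is close to -Q. Hence the
  supremum of the transform over I_n is of exact order n^-(alpha + 3/2), while omega_n is of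
  order n^(2 alpha + 1), so the amalgam series behaves like the sum of
  n^(2 alpha + 1 - (alpha + 3/2) q).
\<close>

section \<open>The power series Y_nu\<close>

definition bessel_coeff :: "real \<Rightarrow> nat \<Rightarrow> real" where
  "bessel_coeff v k = (-1) ^ k / (4 ^ k * fact k * Gamma (v + real k + 1))"

text \<open>bessel_Y v (y^2) = j_v(y) / Gamma(v + 1) = (y/2)^-v J_v(y); in the variable t = y^2 it is
  an ordinary power series.\<close>

definition bessel_Y :: "real \<Rightarrow> real \<Rightarrow> real" where
  "bessel_Y v t = (\<Sum>k. bessel_coeff v k * t ^ k)"

lemma Gamma_shift:
  assumes "v > -1"
  shows "Gamma (v + real (Suc k) + 1) = (v + real k + 1) * Gamma (v + real k + 1)"
proof -
  have "v + real k + 1 \<notin> \<int>\<^sub>\<le>\<^sub>0"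
    using assms nonpos_Ints_nonpos by fastforce
  then show ?thesis
    using Gamma_plus1[of "v + real k + 1"] by (simp add: add_ac)
qed

lemma Gamma_shift_pos:
  assumes "v > -1"
  shows "Gamma (v + real k + 1) > 0"
  using assms by (intro Gamma_real_pos) linarith

lemma bessel_coeff_Suc:
  assumes "v > -1"
  shows "bessel_coeff v (Suc k) = - bessel_coeff v k / (4 * (real k + 1) * (v + real k + 1))"
  using Gamma_shift[OF assms, of k] Gamma_shift_pos[OF assms, of k] assms
  unfolding bessel_coeff_def by (simp add: divide_simps)

lemma bessel_coeff_shift:
  assumes "v > -1"
  shows "(v + 1 + real k) * bessel_coeff (v + 1) k = bessel_coeff v k"
proof -
  have "Gamma (v + 1 + real k + 1) = (v + 1 + real k) * Gamma (v + real k + 1)"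
    using Gamma_shift[OF assms, of k] by (simp add: add_ac)
  then show ?thesis
    using Gamma_shift_pos[OF assms, of k] assms unfolding bessel_coeff_def
    by (simp add: divide_simps)
qed

lemma diffs_bessel_coeff:
  assumes "v > -1"
  shows "diffs (bessel_coeff v) k = -(1/4) * bessel_coeff (v + 1) k"
proof -
  have "Gamma (v + real (Suc k) + 1) = Gamma (v + 1 + real k + 1)"
    by (simp add: add_ac)
  then show ?thesis
    using Gamma_shift_pos[of "v + 1" k] assms unfolding bessel_coeff_def diffs_def
    by (simp add: divide_simps)
qed

lemma summable_bessel_coeff:
  assumes "v > -1"
  shows "summable (\<lambda>k. bessel_coeff v k * t ^ k)"
proof (rule summable_ratio_test[where c = "1/2" and N = "nat \<lceil>\<bar>t\<bar>\<rceil>"])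
  fix n assume "n \<ge> nat \<lceil>\<bar>t\<bar>\<rceil>"
  then have "\<bar>t\<bar> < v + real n + 1"
    using assms by linarith
  then have "2 * \<bar>t\<bar> \<le> 4 * 1 * (v + real n + 1)"
    by simp
  also have "\<dots> \<le> 4 * (real n + 1) * (v + real n + 1)"
    using assms by (intro mult_right_mono) auto
  finally have "2 * \<bar>t\<bar> \<le> 4 * (real n + 1) * (v + real n + 1)" .
  moreover have pos: "4 * (real n + 1) * (v + real n + 1) > 0"
    using assms by (simp add: add_pos_nonneg)
  ultimately have "\<bar>t\<bar> / (4 * (real n + 1) * (v + real n + 1)) \<le> 1/2"
    by (simp add: field_simps)
  then have "\<bar>bessel_coeff v n\<bar> * \<bar>t\<bar>^n * (\<bar>t\<bar> / (4 * (real n + 1) * (v + real n + 1)))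
      \<le> \<bar>bessel_coeff v n\<bar> * \<bar>t\<bar>^n * (1/2)"
    by (intro mult_left_mono) auto
  then show "norm (bessel_coeff v (Suc n) * t ^ Suc n) \<le> 1/2 * norm (bessel_coeff v n * t ^ n)"
    using pos by (simp add: bessel_coeff_Suc[OF assms] abs_mult power_abs field_simps)
qed simp

lemma bessel_Y_has_real_derivative:
  assumes "v > -1"
  shows "(bessel_Y v has_real_derivative -(1/4) * bessel_Y (v + 1) t) (at t)"
proof -
  have "(bessel_Y v has_real_derivative (\<Sum>k. diffs (bessel_coeff v) k * t ^ k)) (at t)"
    unfolding bessel_Y_def[abs_def]
    by (rule termdiffs_strong_converges_everywhere) (rule summable_bessel_coeff[OF assms])
  also have "(\<Sum>k. diffs (bessel_coeff v) k * t ^ k) = -(1/4) * bessel_Y (v + 1) t"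
    using suminf_mult[OF summable_bessel_coeff[of "v + 1" t], of "-(1/4)"] assms
    unfolding bessel_Y_def diffs_bessel_coeff[OF assms] by (simp add: mult.assoc)
  finally show ?thesis .
qed

lemma bessel_Y_recurrence:
  assumes "v > -1"
  shows "(2 * v + 2) * bessel_Y (v + 1) t - (t / 2) * bessel_Y (v + 2) t = 2 * bessel_Y v t"
proof -
  let ?c = "bessel_coeff (v + 1)"
  let ?g = "\<lambda>k. real k * ?c k * t ^ k"
  have v1: "v + 1 > -1"
    using assms by simp
  have sd: "summable (\<lambda>k. diffs ?c k * t ^ k)"
    by (rule termdiff_converges_all) (rule summable_bessel_coeff[OF v1])
  have g_Suc: "t * (diffs ?c k * t ^ k) = ?g (Suc k)" for k
    by (simp add: diffs_def)
  have sg: "summable ?g"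
    using summable_mult[OF sd, of t] summable_Suc_iff[of ?g] unfolding g_Suc by simp
  have "(t / 2) * bessel_Y (v + 2) t = -2 * (t * (\<Sum>k. diffs ?c k * t ^ k))"
    using suminf_mult[OF summable_bessel_coeff[of "v + 2" t], of "-(1/4)"] assms
    unfolding bessel_Y_def diffs_bessel_coeff[OF v1] by (simp add: mult.assoc add.assoc)
  also have "t * (\<Sum>k. diffs ?c k * t ^ k) = (\<Sum>k. ?g k)"
    using suminf_mult[OF sd, of t] suminf_split_head[OF sg] unfolding g_Suc by simp
  finally have Y2: "(t / 2) * bessel_Y (v + 2) t = -2 * (\<Sum>k. ?g k)" .
  have "(2 * v + 2) * bessel_Y (v + 1) t - (t / 2) * bessel_Y (v + 2) t
      = (\<Sum>k. (2 * v + 2) * (?c k * t ^ k)) + (\<Sum>k. 2 * ?g k)"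
    unfolding Y2 unfolding bessel_Y_def
    using suminf_mult[OF summable_bessel_coeff[OF v1, of t]] suminf_mult[OF sg] by simp
  also have "\<dots> = (\<Sum>k. (2 * v + 2) * (?c k * t ^ k) + 2 * ?g k)"
    by (rule suminf_add[OF summable_mult[OF summable_bessel_coeff[OF v1]] summable_mult[OF sg]])
  also have "\<dots> = (\<Sum>k. 2 * ((v + 1 + real k) * ?c k) * t ^ k)"
    by (rule suminf_cong) (simp add: algebra_simps)
  also have "\<dots> = 2 * bessel_Y v t"
    using suminf_mult[OF summable_bessel_coeff[OF assms, of t]]
    unfolding bessel_coeff_shift[OF assms] bessel_Y_def by (simp add: mult.assoc)
  finally show ?thesis .
qed

lemma bessel_Y_0: "bessel_Y v 0 = 1 / Gamma (v + 1)"
  unfolding bessel_Y_def using powser_zero[of "bessel_coeff v"] by (simp add: bessel_coeff_def)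

lemma isCont_bessel_Y: "v > -1 \<Longrightarrow> isCont (bessel_Y v) t"
  using bessel_Y_has_real_derivative DERIV_isCont by blast

lemma continuous_on_bessel_Y [continuous_intros]:
  "v > -1 \<Longrightarrow> continuous_on S f \<Longrightarrow> continuous_on S (\<lambda>x. bessel_Y v (f x))"
  using continuous_on_compose2[of UNIV "bessel_Y v" S f] isCont_bessel_Y
  by (simp add: continuous_at_imp_continuous_on)

lemma bessel_j_eq_bessel_Y:
  assumes "a > -1"
  shows "bessel_j a y = Gamma (a + 1) * bessel_Y a (y^2)"
proof -
  have "2 ^ (2 * k) = (4::real) ^ k" "y ^ (2 * k) = (y^2) ^ k" for k
    by (simp_all add: power_mult)
  then have "bessel_j a y = (\<Sum>k. Gamma (a + 1) * (bessel_coeff a k * (y^2) ^ k))"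
    unfolding bessel_j_def bessel_coeff_def by (simp add: ac_simps)
  also have "\<dots> = Gamma (a + 1) * bessel_Y a (y^2)"
    using suminf_mult[OF summable_bessel_coeff[OF assms, of "y^2"]] unfolding bessel_Y_def by simp
  finally show ?thesis .
qed

lemma bessel_Y_has_real_derivative_comp [derivative_intros]:
  assumes "v > -1" "(f has_real_derivative f') (at x)"
  shows "((\<lambda>x. bessel_Y v (f x)) has_real_derivative (-(1/4) * bessel_Y (v + 1) (f x)) * f') (at x)"
  using DERIV_chain2[OF bessel_Y_has_real_derivative[OF assms(1)] assms(2)] .

section \<open>A first-order form of Bessel's equation\<close>

text \<open>For beta = nu + 1/2 this system is solved by P(x) = 2^nu sqrt x J_nu(x) and
  Q(x) = 2^nu sqrt x J_(nu+1)(x).\<close>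

definition bessel_pair :: "real \<Rightarrow> (real \<Rightarrow> real) \<Rightarrow> (real \<Rightarrow> real) \<Rightarrow> bool" where
  "bessel_pair \<beta> P Q \<longleftrightarrow> (\<forall>x>0.
     (P has_real_derivative \<beta> / x * P x - Q x) (at x) \<and>
     (Q has_real_derivative P x - \<beta> / x * Q x) (at x))"

lemma bessel_pair_zero_propagates_left:
  assumes pair: "bessel_pair \<beta> P Q" and "\<beta> > 0" "0 < d" "d \<le> x1"
    and "P x1 = 0" "Q x1 = 0"
  shows "P d = 0"
proof -
  define K where "K = 2 * \<beta> / d"
  define H where "H x = (P x ^ 2 + Q x ^ 2) * exp (K * x)" for x
  define H' where "H' x = (2 * \<beta> / x * (P x ^ 2 - Q x ^ 2) + K * (P x ^ 2 + Q x ^ 2)) * exp (K * x)" for x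
  have dH: "(H has_real_derivative H' x) (at x)" if "x \<in> {d..x1}" for x
  proof -
    have "x > 0"
      using that \<open>0 < d\<close> by simp
    with pair show ?thesis
      unfolding H_def[abs_def] H'_def bessel_pair_def
      by (auto intro!: derivative_eq_intros simp: algebra_simps power2_eq_square)
  qed
  have H'_nonneg: "H' x \<ge> 0" if "x \<in> {d..x1}" for x
  proof -
    have "2 * \<beta> / x \<le> K"
      unfolding K_def using that \<open>\<beta> > 0\<close> \<open>0 < d\<close> by (intro divide_left_mono) auto
    moreover have "2 * \<beta> / x * (P x ^ 2 - Q x ^ 2) + K * (P x ^ 2 + Q x ^ 2)
        = (K - 2 * \<beta> / x) * (P x ^ 2 + Q x ^ 2) + 2 * (2 * \<beta> / x * P x ^ 2)"
      by (simp add: algebra_simps)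
    moreover have "2 * \<beta> / x * P x ^ 2 \<ge> 0"
      using that \<open>\<beta> > 0\<close> \<open>0 < d\<close> by simp
    ultimately have "2 * \<beta> / x * (P x ^ 2 - Q x ^ 2) + K * (P x ^ 2 + Q x ^ 2) \<ge> 0"
      by simp
    then show ?thesis
      unfolding H'_def by simp
  qed
  have "H d \<le> H x1"
  proof (rule DERIV_nonneg_imp_nondecreasing[OF \<open>d \<le> x1\<close>])
    fix x assume "d \<le> x" "x \<le> x1"
    then show "\<exists>D. (H has_real_derivative D) (at x) \<and> D \<ge> 0"
      using dH[of x] H'_nonneg[of x] by auto
  qed
  also have "H x1 = 0"
    unfolding H_def using assms by simp
  finally have "P d ^ 2 + Q d ^ 2 \<le> 0"
    unfolding H_def by (simp add: mult_le_0_iff)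
  then show "P d = 0"
    by (simp add: sum_power2_le_zero_iff)
qed

lemma inverse_square_growth_bounds:
  fixes E E' :: "real \<Rightarrow> real"
  assumes "x0 > 0" "k \<ge> 0"
    and deriv: "\<And>x. x \<ge> x0 \<Longrightarrow> (E has_real_derivative E' x) (at x)"
    and growth: "\<And>x. x \<ge> x0 \<Longrightarrow> \<bar>E' x\<bar> \<le> k / x^2 * E x"
    and nonneg: "\<And>x. x \<ge> x0 \<Longrightarrow> E x \<ge> 0" and "x0 \<le> x"
  shows "E x0 * exp (- (k / x0)) \<le> E x" "E x \<le> E x0 * exp (k / x0)"
proof -
  define G where "G s y = E y * exp (s * (k / y))" for s y
  have dG: "(G s has_real_derivative (E' y + s * (- k / y^2) * E y) * exp (s * (k / y))) (at y)"
    if "y \<ge> x0" for s y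
    using that \<open>x0 > 0\<close> unfolding G_def
    by (auto intro!: derivative_eq_intros deriv simp: field_simps power2_eq_square)
  have "G (-1) x0 \<le> G (-1) x"
  proof (rule DERIV_nonneg_imp_nondecreasing[OF \<open>x0 \<le> x\<close>])
    fix y assume y: "x0 \<le> y"
    have "(E' y + (-1) * (- k / y^2) * E y) * exp ((-1) * (k / y)) \<ge> 0"
      using growth[OF y] by (simp add: abs_le_iff)
    with dG[OF y] show "\<exists>D. (G (-1) has_real_derivative D) (at y) \<and> D \<ge> 0"
      by blast
  qed
  moreover have "G 1 x \<le> G 1 x0"
  proof (rule DERIV_nonpos_imp_nonincreasing[OF \<open>x0 \<le> x\<close>])
    fix y assume y: "x0 \<le> y"
    have "(E' y + 1 * (- k / y^2) * E y) * exp (1 * (k / y)) \<le> 0"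
      using growth[OF y] by (simp add: abs_le_iff mult_le_0_iff)
    with dG[OF y] show "\<exists>D. (G 1 has_real_derivative D) (at y) \<and> D \<le> 0"
      by blast
  qed
  moreover have "E x * exp (- (k / x)) \<le> E x" "E x \<le> E x * exp (k / x)"
    using nonneg[OF \<open>x0 \<le> x\<close>] \<open>k \<ge> 0\<close> \<open>x0 > 0\<close> \<open>x0 \<le> x\<close>
    by (auto intro!: mult_left_le mult_le_cancel_left1[THEN iffD2])
  ultimately show "E x0 * exp (- (k / x0)) \<le> E x" "E x \<le> E x0 * exp (k / x0)"
    unfolding G_def by simp_all
qed

lemma sum_squares_minus_cross_term_bounds:
  fixes p q t :: real
  assumes "\<bar>t\<bar> \<le> 1"
  shows "(p^2 + q^2) / 2 \<le> p^2 + q^2 - t * p * q" "p^2 + q^2 - t * p * q \<le> 3 * (p^2 + q^2) / 2"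
    "\<bar>p * q\<bar> \<le> p^2 + q^2 - t * p * q"
proof -
  have "\<bar>t * p * q\<bar> = \<bar>t\<bar> * \<bar>p * q\<bar>"
    by (simp add: abs_mult)
  also have "\<dots> \<le> \<bar>p * q\<bar>"
    using assms by (intro mult_left_le_one_le) auto
  finally have "t * p * q \<le> \<bar>p * q\<bar>" "- (t * p * q) \<le> \<bar>p * q\<bar>"
    by linarith+
  moreover have "2 * \<bar>p * q\<bar> \<le> p^2 + q^2"
    using sum_squares_bound[of "\<bar>p\<bar>" "\<bar>q\<bar>"] by (simp add: abs_mult)
  ultimately show "(p^2 + q^2) / 2 \<le> p^2 + q^2 - t * p * q" "p^2 + q^2 - t * p * q \<le> 3 * (p^2 + q^2) / 2"
    "\<bar>p * q\<bar> \<le> p^2 + q^2 - t * p * q"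
    by auto
qed

lemma bessel_pair_energy_bounds:
  assumes pair: "bessel_pair \<beta> P Q" and "\<beta> > 0" "2 * \<beta> \<le> x0"
    and "P x0 ^ 2 + Q x0 ^ 2 > 0"
  obtains c C where "c > 0" "\<And>x. x \<ge> x0 \<Longrightarrow> c \<le> P x ^ 2 + Q x ^ 2 \<and> P x ^ 2 + Q x ^ 2 \<le> C"
proof -
  have "x0 > 0"
    using assms by simp
  \<comment> \<open>The cross term makes the logarithmic derivative of \<open>E\<close> of order \<open>1/x\<^sup>2\<close> instead of \<open>1/x\<close>.\<close>
  define E where "E x = P x ^ 2 + Q x ^ 2 - 2 * \<beta> / x * P x * Q x" for x
  define E' where "E' x = 2 * \<beta> / x^2 * P x * Q x" for x
  have dE: "(E has_real_derivative E' x) (at x)" if "x \<ge> x0" for x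
  proof -
    have "x > 0"
      using that \<open>x0 > 0\<close> by simp
    then have "(P has_real_derivative \<beta> / x * P x - Q x) (at x)"
      and "(Q has_real_derivative P x - \<beta> / x * Q x) (at x)"
      using pair unfolding bessel_pair_def by blast+
    with \<open>x > 0\<close> show ?thesis
      unfolding E_def[abs_def] E'_def
      by (auto intro!: derivative_eq_intros simp: field_simps power2_eq_square)
  qed
  have E_bounds: "(P x ^ 2 + Q x ^ 2) / 2 \<le> E x \<and> E x \<le> 3 * (P x ^ 2 + Q x ^ 2) / 2
      \<and> \<bar>E' x\<bar> \<le> 2 * \<beta> / x^2 * E x" if "x \<ge> x0" for x
  proof -
    have "\<bar>2 * \<beta> / x\<bar> \<le> 1"
      using that assms \<open>x0 > 0\<close> by simp
    note cross = sum_squares_minus_cross_term_bounds[OF this, of "P x" "Q x", folded E_def]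
    have "\<bar>E' x\<bar> = 2 * \<beta> / x^2 * \<bar>P x * Q x\<bar>"
      unfolding E'_def using that \<open>\<beta> > 0\<close> by (simp add: abs_mult)
    also have "\<dots> \<le> 2 * \<beta> / x^2 * E x"
      using cross(3) \<open>\<beta> > 0\<close> by (intro mult_left_mono) auto
    finally show ?thesis
      using cross(1,2) by blast
  qed
  have E_nonneg: "E x \<ge> 0" if "x \<ge> x0" for x
    using E_bounds[OF that] zero_le_power2[of "P x"] zero_le_power2[of "Q x"] by linarith
  have E'_bound: "\<bar>E' x\<bar> \<le> 2 * \<beta> / x^2 * E x" if "x \<ge> x0" for x
    using E_bounds[OF that] by blast
  note growth = inverse_square_growth_bounds[OF \<open>x0 > 0\<close> _ dE E'_bound E_nonneg]
  show ?thesis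
  proof
    show "2/3 * (E x0 * exp (- (2 * \<beta> / x0))) > 0"
      using E_bounds[of x0] assms by simp
  next
    fix x assume "x \<ge> x0"
    then have "E x0 * exp (- (2 * \<beta> / x0)) \<le> E x" "E x \<le> E x0 * exp (2 * \<beta> / x0)"
      using growth \<open>\<beta> > 0\<close> by auto
    with E_bounds[OF \<open>x \<ge> x0\<close>]
    show "2/3 * (E x0 * exp (- (2 * \<beta> / x0))) \<le> P x ^ 2 + Q x ^ 2
        \<and> P x ^ 2 + Q x ^ 2 \<le> 2 * (E x0 * exp (2 * \<beta> / x0))"
      by auto
  qed
qed

lemma bessel_pair_oscillation:
  assumes pair: "bessel_pair \<beta> P Q" and "\<beta> > 0" "2 * \<beta> \<le> x0"
    and "c > 0" and energy: "\<And>x. x \<ge> x0 \<Longrightarrow> c \<le> P x ^ 2 + Q x ^ 2"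
  obtains m where "m > 0" "\<And>s. s \<ge> x0 \<Longrightarrow> \<exists>x. s \<le> x \<and> x \<le> s + 1/2 \<and> m \<le> \<bar>P x\<bar>"
proof
  define m where "m = sqrt (c / 50)"
  show "m > 0"
    unfolding m_def using \<open>c > 0\<close> by simp
  have m2: "m^2 = c / 50"
    unfolding m_def using \<open>c > 0\<close> by simp
  fix s assume "s \<ge> x0"
  show "\<exists>x. s \<le> x \<and> x \<le> s + 1/2 \<and> m \<le> \<bar>P x\<bar>"
  proof (rule ccontr)
    \<comment> \<open>If \<open>|P| < m\<close> on \<open>[s, s + 1/2]\<close>, then \<open>|Q| \<ge> 5 m\<close> there and \<open>P\<close> moves too fast.\<close>
    assume "\<not> ?thesis"
    then have small: "\<bar>P x\<bar> < m" if "s \<le> x" "x \<le> s + 1/2" for x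
      using that by force
    have "x0 > 0"
      using assms by simp
    obtain z where z: "s < z" "z < s + 1/2"
      and mvt: "P (s + 1/2) - P s = (s + 1/2 - s) * (\<beta> / z * P z - Q z)"
      using MVT2[of s "s + 1/2" P "\<lambda>x. \<beta> / x * P x - Q x"] pair \<open>s \<ge> x0\<close> \<open>x0 > 0\<close>
      unfolding bessel_pair_def by force
    have "P z ^ 2 \<le> m ^ 2"
      using small[of z] z by (metis abs_ge_zero less_imp_le power2_abs power_mono)
    then have "(5 * m) ^ 2 \<le> \<bar>Q z\<bar> ^ 2"
      using energy[of z] z \<open>s \<ge> x0\<close> m2 \<open>c > 0\<close> by (simp add: power_mult_distrib)
    then have "5 * m \<le> \<bar>Q z\<bar>"
      by (rule power2_le_imp_le) simp_all
    moreover have "\<bar>\<beta> / z * P z\<bar> \<le> m / 2"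
    proof -
      have "z > 0" "2 * \<beta> \<le> z"
        using z \<open>s \<ge> x0\<close> assms by linarith+
      then have "\<beta> / z \<le> 1/2"
        by (simp add: divide_le_eq)
      have "\<bar>\<beta> / z * P z\<bar> = \<beta> / z * \<bar>P z\<bar>"
        using \<open>z > 0\<close> \<open>\<beta> > 0\<close> by (simp add: abs_mult)
      also have "\<dots> \<le> 1/2 * m"
        using \<open>\<beta> / z \<le> 1/2\<close> small[of z] z by (intro mult_mono) auto
      finally show ?thesis
        by simp
    qed
    moreover have "\<bar>Q z\<bar> \<le> \<bar>\<beta> / z * P z\<bar> + \<bar>\<beta> / z * P z - Q z\<bar>"
      using abs_triangle_ineq4[of "\<beta> / z * P z" "\<beta> / z * P z - Q z"] by simp
    moreover have "\<bar>P (s + 1/2) - P s\<bar> = \<bar>\<beta> / z * P z - Q z\<bar> / 2"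
      unfolding mvt by (simp add: abs_mult)
    moreover have "\<bar>P (s + 1/2) - P s\<bar> \<le> \<bar>P (s + 1/2)\<bar> + \<bar>P s\<bar>"
      by (rule abs_triangle_ineq4)
    moreover have "\<bar>P s\<bar> < m" "\<bar>P (s + 1/2)\<bar> < m"
      using small by auto
    ultimately show False
      using \<open>m > 0\<close> by linarith
  qed
qed

section \<open>Asymptotics of Y_nu\<close>

lemma bessel_pair_bessel_Y:
  assumes "\<nu> > -1"
  shows "bessel_pair (\<nu> + 1/2) (\<lambda>x. x powr (\<nu> + 1/2) * bessel_Y \<nu> (x^2))
           (\<lambda>x. x powr (\<nu> + 3/2) * bessel_Y (\<nu> + 1) (x^2) / 2)"
  unfolding bessel_pair_def
proof (intro allI impI conjI)
  fix x :: real assume x: "x > 0"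
  have pow1: "x powr (\<nu> + 1/2 - 1) = x powr (\<nu> + 1/2) / x"
    using x by (subst powr_diff) simp
  have pow2: "x powr (\<nu> + 3/2) = x powr (\<nu> + 1/2) * x"
    using x powr_add[of x "\<nu> + 1/2" 1] by (simp add: add.commute)
  have pow3: "x powr (\<nu> + 3/2 - 1) = x powr (\<nu> + 1/2)"
    by (simp add: add.commute)
  have order: "\<nu> + 1 + 1 = \<nu> + 2"
    by simp
  have rec: "bessel_Y \<nu> (x^2) = ((2 * \<nu> + 2) * bessel_Y (\<nu> + 1) (x^2) - (x^2 / 2) * bessel_Y (\<nu> + 2) (x^2)) / 2"
    using bessel_Y_recurrence[OF assms, of "x^2"] by simp
  show "((\<lambda>x. x powr (\<nu> + 1/2) * bessel_Y \<nu> (x^2)) has_real_derivative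
     (\<nu> + 1/2) / x * (x powr (\<nu> + 1/2) * bessel_Y \<nu> (x^2)) - x powr (\<nu> + 3/2) * bessel_Y (\<nu> + 1) (x^2) / 2) (at x)"
  proof (rule DERIV_cong)
    show "((\<lambda>x. x powr (\<nu> + 1/2) * bessel_Y \<nu> (x^2)) has_real_derivative
      (\<nu> + 1/2) * x powr (\<nu> + 1/2 - 1) * bessel_Y \<nu> (x^2)
      + x powr (\<nu> + 1/2) * (-(1/4) * bessel_Y (\<nu> + 1) (x^2) * (2 * x))) (at x)"
      using assms x by (auto intro!: derivative_eq_intros)
  qed (use x in \<open>unfold pow1 pow2, simp add: field_simps\<close>)
  show "((\<lambda>x. x powr (\<nu> + 3/2) * bessel_Y (\<nu> + 1) (x^2) / 2) has_real_derivative
     x powr (\<nu> + 1/2) * bessel_Y \<nu> (x^2) - (\<nu> + 1/2) / x * (x powr (\<nu> + 3/2) * bessel_Y (\<nu> + 1) (x^2) / 2)) (at x)"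
  proof (rule DERIV_cong)
    show "((\<lambda>x. x powr (\<nu> + 3/2) * bessel_Y (\<nu> + 1) (x^2) / 2) has_real_derivative
      ((\<nu> + 3/2) * x powr (\<nu> + 3/2 - 1) * bessel_Y (\<nu> + 1) (x^2)
      + x powr (\<nu> + 3/2) * (-(1/4) * bessel_Y (\<nu> + 1 + 1) (x^2) * (2 * x))) / 2) (at x)"
      using assms x by (auto intro!: derivative_eq_intros)
  qed (use x in \<open>unfold pow2 pow3 order rec, simp add: field_simps power2_eq_square add_ac\<close>)
qed

lemma bessel_Y_pos_near_0:
  assumes "\<nu> > -1"
  shows "\<forall>\<^sub>F x in at_right 0. bessel_Y \<nu> (x^2) > 0"
proof -
  have "isCont (\<lambda>x. bessel_Y \<nu> (x^2)) 0"
    using continuous_on_bessel_Y[OF assms, of UNIV "\<lambda>x. x^2"]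
    by (simp add: continuous_on_eq_continuous_at)
  then have "((\<lambda>x. bessel_Y \<nu> (x^2)) \<longlongrightarrow> bessel_Y \<nu> 0) (at_right 0)"
    by (simp add: isCont_def filterlim_at_split)
  moreover have "bessel_Y \<nu> 0 > 0"
    using assms by (simp add: bessel_Y_0)
  ultimately show ?thesis
    by (rule order_tendstoD(1))
qed

lemma bessel_Y_energy_pos:
  assumes "\<nu> > -1/2" "x0 > 0"
  shows "(x0 powr (\<nu> + 1/2) * bessel_Y \<nu> (x0^2)) ^ 2
    + (x0 powr (\<nu> + 3/2) * bessel_Y (\<nu> + 1) (x0^2) / 2) ^ 2 > 0" (is "?P x0 ^ 2 + ?Q x0 ^ 2 > 0")
proof (rule ccontr)
  \<comment> \<open>Otherwise \<open>P\<close> vanishes on \<open>(0, x0]\<close>, but \<open>Y\<^sub>\<nu>(0) > 0\<close>.\<close>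
  assume "\<not> ?thesis"
  then have "?P x0 = 0" "?Q x0 = 0"
    by (simp_all add: sum_power2_gt_zero_iff)
  have "\<forall>\<^sub>F d in at_right 0. bessel_Y \<nu> (d^2) > 0 \<and> 0 < d \<and> d \<le> x0"
    using bessel_Y_pos_near_0[of \<nu>] assms eventually_at_right_less[of 0]
      eventually_at_right_field[of "\<lambda>d. d \<le> x0" 0]
    by (auto intro!: eventually_conj intro: less_imp_le)
  then obtain d where "bessel_Y \<nu> (d^2) > 0" "0 < d" "d \<le> x0"
    using eventually_happens'[OF trivial_limit_at_right_real] by blast
  moreover have "bessel_pair (\<nu> + 1/2) ?P ?Q" "\<nu> + 1/2 > 0"
    using assms by (intro bessel_pair_bessel_Y, simp_all)
  then have "?P d = 0"
    using bessel_pair_zero_propagates_left \<open>0 < d\<close> \<open>d \<le> x0\<close> \<open>?P x0 = 0\<close> \<open>?Q x0 = 0\<close> by blast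
  ultimately show False
    by simp
qed

lemma bessel_Y_asymptotics:
  assumes "\<nu> > -1/2"
  obtains m x0 M where "m > 0"
    "\<And>x. x \<ge> x0 \<Longrightarrow> \<bar>x powr (\<nu> + 1/2) * bessel_Y \<nu> (x^2)\<bar> \<le> M"
    "\<And>s. s \<ge> x0 \<Longrightarrow> \<exists>x. s \<le> x \<and> x < s + 1 \<and> m \<le> \<bar>x powr (\<nu> + 1/2) * bessel_Y \<nu> (x^2)\<bar>"
proof -
  define \<beta> where "\<beta> = \<nu> + 1/2"
  define P where "P x = x powr (\<nu> + 1/2) * bessel_Y \<nu> (x^2)" for x
  define Q where "Q x = x powr (\<nu> + 3/2) * bessel_Y (\<nu> + 1) (x^2) / 2" for x
  have "\<beta> > 0"
    unfolding \<beta>_def using assms by simp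
  have pair: "bessel_pair \<beta> P Q"
    unfolding \<beta>_def P_def[abs_def] Q_def[abs_def] using assms by (intro bessel_pair_bessel_Y) simp
  define x0 where "x0 = 2 * \<beta>"
  have "x0 > 0"
    unfolding x0_def using \<open>\<beta> > 0\<close> by simp
  have "P x0 ^ 2 + Q x0 ^ 2 > 0"
    unfolding P_def Q_def using assms \<open>x0 > 0\<close> by (rule bessel_Y_energy_pos)
  then obtain c C where "c > 0" and energy: "\<And>x. x \<ge> x0 \<Longrightarrow> c \<le> P x ^ 2 + Q x ^ 2 \<and> P x ^ 2 + Q x ^ 2 \<le> C"
    using bessel_pair_energy_bounds[OF pair \<open>\<beta> > 0\<close>] unfolding x0_def by auto
  obtain m where "m > 0" and osc: "\<And>s. s \<ge> x0 \<Longrightarrow> \<exists>x. s \<le> x \<and> x \<le> s + 1/2 \<and> m \<le> \<bar>P x\<bar>"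
    using bessel_pair_oscillation[OF pair \<open>\<beta> > 0\<close> _ \<open>c > 0\<close>, of x0] energy unfolding x0_def by auto
  show ?thesis
  proof (rule that[OF \<open>m > 0\<close>])
    fix x assume "x \<ge> x0"
    then have "P x ^ 2 + Q x ^ 2 \<le> C"
      using energy by blast
    then have "\<bar>P x\<bar> ^ 2 \<le> C"
      using zero_le_power2[of "Q x"] unfolding power2_abs by linarith
    then show "\<bar>x powr (\<nu> + 1/2) * bessel_Y \<nu> (x^2)\<bar> \<le> sqrt C"
      unfolding P_def by (rule real_le_rsqrt)
  next
    fix s assume "s \<ge> x0"
    then show "\<exists>x. s \<le> x \<and> x < s + 1 \<and> m \<le> \<bar>x powr (\<nu> + 1/2) * bessel_Y \<nu> (x^2)\<bar>"
      using osc[of s] unfolding P_def by force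
  qed
qed

section \<open>The transform of the indicator of the unit interval\<close>

lemma bessel_Y_antiderivative:
  assumes "a > -1" "z > 0"
  shows "((\<lambda>z. z powr (2 * a + 2) * bessel_Y (a + 1) ((l * z)^2)) has_real_derivative
           2 * (z powr (2 * a + 1) * bessel_Y a ((l * z)^2))) (at z)"
proof (rule DERIV_cong)
  show "((\<lambda>z. z powr (2 * a + 2) * bessel_Y (a + 1) ((l * z)^2)) has_real_derivative
      (2 * a + 2) * z powr (2 * a + 2 - 1) * bessel_Y (a + 1) ((l * z)^2)
      + z powr (2 * a + 2) * (-(1/4) * bessel_Y (a + 1 + 1) ((l * z)^2) * (2 * l * (l * z)))) (at z)"
    using assms by (auto intro!: derivative_eq_intros)
  have pow1: "z powr (2 * a + 2) = z powr (2 * a + 1) * z"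
    using powr_add[of z "2 * a + 1" 1] assms by (simp add: add.commute)
  have pow2: "z powr (2 * a + 2 - 1) = z powr (2 * a + 1)"
    by (simp add: add.commute)
  have order: "a + 1 + 1 = a + 2"
    by simp
  have rec: "bessel_Y a ((l * z)^2) = ((2 * a + 2) * bessel_Y (a + 1) ((l * z)^2)
      - ((l * z)^2 / 2) * bessel_Y (a + 2) ((l * z)^2)) / 2"
    using bessel_Y_recurrence[OF assms(1), of "(l * z)^2"] by simp
  show "(2 * a + 2) * z powr (2 * a + 2 - 1) * bessel_Y (a + 1) ((l * z)^2)
      + z powr (2 * a + 2) * (-(1/4) * bessel_Y (a + 1 + 1) ((l * z)^2) * (2 * l * (l * z)))
      = 2 * (z powr (2 * a + 1) * bessel_Y a ((l * z)^2))"
    unfolding pow1 pow2 order rec by (simp add: field_simps power2_eq_square)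
qed

lemma haar_density: "haar a = density lborel (\<lambda>z. ennreal (indicator {0..} z * z powr (2 * a + 1)))"
  unfolding haar_def by (rule arg_cong[of _ _ "density lborel"]) (auto simp: indicator_def fun_eq_iff)

lemma bk_fourier_indicator_unit_interval_eq_integral:
  assumes "a > -1/2"
  shows "bk_fourier a (indicator {0..<1}) l = integral {0..1} (\<lambda>x. x powr (2 * a + 1) * bessel_j a (l * x))"
proof -
  define h where "h z = indicator {0..} z * z powr (2 * a + 1)" for z :: real
  define g where "g x = x powr (2 * a + 1) * bessel_j a (l * x)" for x
  have "a > -1"
    using assms by simp
  have cont: "continuous_on UNIV (\<lambda>x. bessel_j a (l * x))"
    unfolding bessel_j_eq_bessel_Y[OF \<open>a > -1\<close>] using \<open>a > -1\<close>
    by (intro continuous_intros) auto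
  then have "(\<lambda>x. bessel_j a (l * x)) \<in> borel_measurable borel"
    by (rule borel_measurable_continuous_onI)
  then have meas: "(\<lambda>x. indicator {0..<1} x * bessel_j a (l * x)) \<in> borel_measurable borel"
    by measurable
  have int: "set_integrable lborel {0..1} g"
    unfolding g_def using assms
    by (intro borel_integrable_atLeastAtMost' continuous_intros continuous_on_powr'
        continuous_on_subset[OF cont]) auto
  have "bk_fourier a (indicator {0..<1}) l = (\<integral>x. h x *\<^sub>R (indicator {0..<1} x * bessel_j a (l * x)) \<partial>lborel)"
    unfolding bk_fourier_def haar_density h_def[symmetric]
    using meas by (intro integral_density) (auto simp: h_def)
  also have "\<dots> = (\<integral>x. indicator {0..1} x *\<^sub>R g x \<partial>lborel)"
  proof (rule integral_cong_AE)
    show "(\<lambda>x. h x *\<^sub>R (indicator {0..<1} x * bessel_j a (l * x))) \<in> borel_measurable lborel"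
      using meas unfolding h_def by measurable
    show "(\<lambda>x. indicator {0..1} x *\<^sub>R g x) \<in> borel_measurable lborel"
      using int unfolding set_integrable_def by (rule borel_measurable_integrable)
    show "AE x in lborel. h x *\<^sub>R (indicator {0..<1} x * bessel_j a (l * x)) = indicator {0..1} x *\<^sub>R g x"
      using AE_lborel_singleton[of 1] by eventually_elim (auto simp: h_def g_def indicator_def)
  qed
  also have "\<dots> = integral {0..1} g"
    using set_borel_integral_eq_integral(2)[OF int] unfolding set_lebesgue_integral_def .
  finally show ?thesis
    unfolding g_def .
qed

lemma bk_fourier_indicator_unit_interval:
  assumes "a > -1/2"
  shows "bk_fourier a (indicator {0..<1}) l = Gamma (a + 1) / 2 * bessel_Y (a + 1) (l^2)"
proof -
  define W where "W z = Gamma (a + 1) / 2 * (z powr (2 * a + 2) * bessel_Y (a + 1) ((l * z)^2))" for z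
  have "a > -1"
    using assms by simp
  have "((\<lambda>x. x powr (2 * a + 1) * bessel_j a (l * x)) has_integral (W 1 - W 0)) {0..1}"
  proof (rule fundamental_theorem_of_calculus_interior_strong[of "{}"])
    show "continuous_on {0..1} W"
      unfolding W_def using assms by (intro continuous_intros continuous_on_powr') auto
    fix x :: real assume "x \<in> {0<..<1} - {}"
    then show "(W has_vector_derivative x powr (2 * a + 1) * bessel_j a (l * x)) (at x)"
      using DERIV_cmult[OF bessel_Y_antiderivative[of a x l], of "Gamma (a + 1) / 2"] assms
      unfolding has_real_derivative_iff_has_vector_derivative[symmetric] W_def[abs_def]
        bessel_j_eq_bessel_Y[OF \<open>a > -1\<close>]
      by (simp add: ac_simps)
  qed auto
  then show ?thesis
    unfolding bk_fourier_indicator_unit_interval_eq_integral[OF assms] W_def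
    using assms by (simp add: integral_unique)
qed

lemma continuous_on_bk_fourier_indicator:
  assumes "a > -1/2"
  shows "continuous_on UNIV (bk_fourier a (indicator {0..<1}))"
  unfolding bk_fourier_indicator_unit_interval[OF assms, abs_def]
  using assms by (intro continuous_intros) auto

section \<open>Amalgam norms of functions with power decay\<close>

lemma omega_n_bounds:
  assumes "a \<ge> -1/2" "n \<ge> 1"
  shows "(real n - 1) powr (2 * a + 1) \<le> omega_n a n" "omega_n a n \<le> real n powr (2 * a + 1)"
proof -
  define r where "r = 2 * a + 1"
  define h where "h z = indicator {0..} z * z powr r" for z :: real
  have I: "I_int n = {real n - 1..<real n}"
    unfolding I_int_def ..
  have "r \<ge> 0"
    unfolding r_def using assms by simp
  have emeasure: "emeasure (haar a) (I_int n) = (\<integral>\<^sup>+ x. ennreal (h x) * indicator (I_int n) x \<partial>lborel)"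
    unfolding haar_density h_def r_def by (rule emeasure_density) (auto simp: I)
  have h_bounds: "(real n - 1) powr r \<le> h x \<and> h x \<le> real n powr r" if "x \<in> I_int n" for x
    using that assms \<open>r \<ge> 0\<close> unfolding I h_def by (auto intro!: powr_mono2)
  have lborel_I: "emeasure lborel (I_int n) = 1"
    unfolding I by simp
  have "emeasure (haar a) (I_int n) \<le> (\<integral>\<^sup>+ x. ennreal (real n powr r) * indicator (I_int n) x \<partial>lborel)"
    unfolding emeasure by (intro nn_integral_mono) (auto simp: indicator_def h_bounds)
  also have "\<dots> = ennreal (real n powr r)"
    by (subst nn_integral_cmult_indicator) (auto simp: I lborel_I)
  finally have upper: "emeasure (haar a) (I_int n) \<le> ennreal (real n powr r)" .
  have "ennreal ((real n - 1) powr r) = (\<integral>\<^sup>+ x. ennreal ((real n - 1) powr r) * indicator (I_int n) x \<partial>lborel)"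
    by (subst nn_integral_cmult_indicator) (auto simp: I lborel_I)
  also have "\<dots> \<le> emeasure (haar a) (I_int n)"
    unfolding emeasure by (intro nn_integral_mono) (auto simp: indicator_def h_bounds intro!: ennreal_leI)
  finally have lower: "ennreal ((real n - 1) powr r) \<le> emeasure (haar a) (I_int n)" .
  show "omega_n a n \<le> real n powr (2 * a + 1)"
    using enn2real_mono[OF upper] unfolding omega_n_def measure_def r_def by simp
  moreover have "emeasure (haar a) (I_int n) < \<infinity>"
    using upper by (simp add: le_less_trans)
  ultimately show "(real n - 1) powr (2 * a + 1) \<le> omega_n a n"
    using enn2real_mono[OF lower] unfolding omega_n_def measure_def r_def by simp
qed

lemma summable_iff_powr_comparable:
  fixes T :: "nat \<Rightarrow> real"
  assumes "c > 0" and bounds: "\<And>m. m \<ge> N \<Longrightarrow> c * real m powr s \<le> T m \<and> T m \<le> C * real m powr s"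
  shows "summable T \<longleftrightarrow> s < -1"
proof
  assume "summable T"
  then have "summable (\<lambda>m. c * real m powr s)"
    by (rule summable_comparison_test') (use bounds \<open>c > 0\<close> in auto)
  then have "summable (\<lambda>m. real m powr s)"
    using \<open>c > 0\<close> summable_cmult_iff[of c "\<lambda>m. real m powr s"] by simp
  then show "s < -1"
    by (simp add: summable_real_powr_iff)
next
  assume "s < -1"
  then have "summable (\<lambda>m. C * real m powr s)"
    by (simp add: summable_real_powr_iff)
  moreover have "norm (T m) \<le> C * real m powr s" if "m \<ge> N" for m
  proof -
    have "0 \<le> c * real m powr s"
      using \<open>c > 0\<close> by simp
    then show ?thesis
      using bounds[OF that] by simp
  qed
  ultimately show "summable T"
    by (rule summable_comparison_test')
qed

lemma I_int_Suc: "I_int (Suc m) = {real m..<real m + 1}"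
  unfolding I_int_def by (simp add: add.commute)

lemma SUP_abs_I_int_Suc_bounds:
  fixes g :: "real \<Rightarrow> real"
  assumes "real m \<ge> 1" "b \<ge> 0" "m0 \<ge> 0"
    and bdd: "bdd_above ((\<lambda>l. \<bar>g l\<bar>) ` I_int (Suc m))"
    and upper: "\<And>l. l \<ge> real m \<Longrightarrow> l powr b * \<bar>g l\<bar> \<le> M"
    and lower: "\<exists>l. real m \<le> l \<and> l < real m + 1 \<and> m0 \<le> l powr b * \<bar>g l\<bar>"
  shows "m0 / (2 * real m) powr b \<le> (SUP l\<in>I_int (Suc m). \<bar>g l\<bar>)"
    and "(SUP l\<in>I_int (Suc m). \<bar>g l\<bar>) \<le> M / real m powr b"
proof -
  obtain l where l: "real m \<le> l" "l < real m + 1" and "m0 \<le> l powr b * \<bar>g l\<bar>"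
    using lower by blast
  have "l > 0"
    using l assms by linarith
  have "m0 / (2 * real m) powr b \<le> m0 / l powr b"
    using l \<open>l > 0\<close> assms by (intro divide_left_mono powr_mono2 mult_pos_pos) auto
  also have "\<dots> \<le> \<bar>g l\<bar>"
    using \<open>m0 \<le> l powr b * \<bar>g l\<bar>\<close> \<open>l > 0\<close> by (simp add: divide_le_eq mult.commute)
  also have "\<dots> \<le> (SUP l\<in>I_int (Suc m). \<bar>g l\<bar>)"
    using l by (intro cSUP_upper bdd) (simp add: I_int_Suc)
  finally show "m0 / (2 * real m) powr b \<le> (SUP l\<in>I_int (Suc m). \<bar>g l\<bar>)" .
  show "(SUP l\<in>I_int (Suc m). \<bar>g l\<bar>) \<le> M / real m powr b"
  proof (rule cSUP_least)
    show "I_int (Suc m) \<noteq> {}"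
      by (simp add: I_int_Suc)
  next
    fix l assume "l \<in> I_int (Suc m)"
    then have "real m \<le> l"
      by (simp add: I_int_Suc)
    have "M \<ge> 0"
      using upper[of l] \<open>real m \<le> l\<close> order_trans[of 0 "l powr b * \<bar>g l\<bar>" M] by simp
    have "\<bar>g l\<bar> \<le> M / l powr b"
      using upper[OF \<open>real m \<le> l\<close>] \<open>real m \<le> l\<close> assms by (simp add: le_divide_eq mult.commute)
    also have "\<dots> \<le> M / real m powr b"
      using \<open>real m \<le> l\<close> \<open>M \<ge> 0\<close> assms by (intro divide_left_mono powr_mono2 mult_pos_pos) auto
    finally show "\<bar>g l\<bar> \<le> M / real m powr b" .
  qed
qed

lemma amalgam_norm_finite_iff_power_decay:
  fixes g :: "real \<Rightarrow> real"
  assumes "a \<ge> -1/2" "q > 0" "b \<ge> 0" "m0 > 0"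
    and bdd: "\<And>n. bdd_above ((\<lambda>l. \<bar>g l\<bar>) ` I_int n)"
    and upper: "\<And>l. l \<ge> x0 \<Longrightarrow> l powr b * \<bar>g l\<bar> \<le> M"
    and lower: "\<And>s. s \<ge> x0 \<Longrightarrow> \<exists>l. s \<le> l \<and> l < s + 1 \<and> m0 \<le> l powr b * \<bar>g l\<bar>"
  shows "amalgam_norm_finite a q g \<longleftrightarrow> 2 * a + 1 - b * q < -1"
proof -
  define r where "r = 2 * a + 1"
  define SU where "SU m = (SUP l\<in>I_int (Suc m). \<bar>g l\<bar>)" for m
  define N where "N = nat \<lceil>x0\<rceil> + 1"
  have "summable (\<lambda>m. omega_n a (Suc m) * SU m powr q) \<longleftrightarrow> r - b * q < -1"
  proof (rule summable_iff_powr_comparable)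
    show "m0 powr q / 2 powr (b * q) > 0"
      using \<open>m0 > 0\<close> by simp
    fix m assume "m \<ge> N"
    then have m: "real m \<ge> 1" "real m \<ge> x0"
      unfolding N_def by linarith+
    have "\<And>l. l \<ge> real m \<Longrightarrow> l powr b * \<bar>g l\<bar> \<le> M"
      using upper m by auto
    note SU_bounds = SUP_abs_I_int_Suc_bounds[OF m(1) \<open>b \<ge> 0\<close> _ bdd this lower[OF m(2)]]
    have SU: "m0 / (2 * real m) powr b \<le> SU m" "SU m \<le> M / real m powr b"
      unfolding SU_def using SU_bounds \<open>m0 > 0\<close> by auto
    have \<omega>: "real m powr r \<le> omega_n a (Suc m)" "omega_n a (Suc m) \<le> (2 * real m) powr r"
      using omega_n_bounds[OF \<open>a \<ge> -1/2\<close>, of "Suc m"] powr_mono2[of r "real m + 1" "2 * real m"] m assms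
      unfolding r_def by (auto simp: add.commute)
    have "omega_n a (Suc m) \<ge> 0"
      unfolding omega_n_def by simp
    have "m0 powr q / 2 powr (b * q) * real m powr (r - b * q)
        = real m powr r * (m0 / (2 * real m) powr b) powr q"
      using m \<open>m0 > 0\<close> by (simp add: powr_divide powr_mult powr_powr powr_diff)
    also have "\<dots> \<le> omega_n a (Suc m) * SU m powr q"
      using \<omega> SU \<open>omega_n a (Suc m) \<ge> 0\<close> \<open>m0 > 0\<close> \<open>q > 0\<close>
      by (intro mult_mono powr_mono2) auto
    finally have lower_bound: "m0 powr q / 2 powr (b * q) * real m powr (r - b * q)
        \<le> omega_n a (Suc m) * SU m powr q" .
    have "omega_n a (Suc m) * SU m powr q \<le> (2 * real m) powr r * (M / real m powr b) powr q"
      using \<omega> SU \<open>m0 > 0\<close> \<open>q > 0\<close> order_trans[OF _ SU(1)] by (intro mult_mono powr_mono2) auto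
    also have "\<dots> = 2 powr r * M powr q * real m powr (r - b * q)"
      using m by (simp add: powr_divide powr_mult powr_powr powr_diff)
    finally show "m0 powr q / 2 powr (b * q) * real m powr (r - b * q) \<le> omega_n a (Suc m) * SU m powr q
      \<and> omega_n a (Suc m) * SU m powr q \<le> 2 powr r * M powr q * real m powr (r - b * q)"
      using lower_bound by blast
  qed
  then show ?thesis
    unfolding amalgam_norm_finite_def SU_def r_def using bdd by auto
qed

lemma amalgam_norm_finite_bk_fourier_indicator:
  assumes "a > -1/2" "q > 0"
  shows "amalgam_norm_finite a q (bk_fourier a (indicator {0..<1})) \<longleftrightarrow> q > 2 * (a + 1) / (a + 3/2)"
proof -
  define F where "F = bk_fourier a (indicator {0..<1})"
  define K where "K = Gamma (a + 1) / 2"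
  have "K > 0"
    unfolding K_def using assms by simp
  have F_scaled: "l powr (a + 3/2) * \<bar>F l\<bar> = K * \<bar>l powr (a + 1 + 1/2) * bessel_Y (a + 1) (l^2)\<bar>" for l
    unfolding F_def bk_fourier_indicator_unit_interval[OF assms(1)] K_def
    using assms by (simp add: abs_mult add.assoc)
  have "a + 1 > -1/2"
    using assms by simp
  then obtain m x0 M where "m > 0"
    and upper: "\<And>l. l \<ge> x0 \<Longrightarrow> \<bar>l powr (a + 1 + 1/2) * bessel_Y (a + 1) (l^2)\<bar> \<le> M"
    and lower: "\<And>s. s \<ge> x0 \<Longrightarrow> \<exists>l. s \<le> l \<and> l < s + 1 \<and> m \<le> \<bar>l powr (a + 1 + 1/2) * bessel_Y (a + 1) (l^2)\<bar>"
    by (rule bessel_Y_asymptotics) blast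
  have bdd: "bdd_above ((\<lambda>l. \<bar>F l\<bar>) ` I_int n)" for n
  proof -
    have "bounded ((\<lambda>l. \<bar>F l\<bar>) ` {real n - 1..real n})"
      unfolding F_def using continuous_on_bk_fourier_indicator[OF assms(1)]
      by (intro compact_imp_bounded compact_continuous_image continuous_on_rabs)
        (auto intro: continuous_on_subset)
    then show ?thesis
      by (rule bdd_above_mono[OF bounded_imp_bdd_above]) (auto simp: I_int_def)
  qed
  have F_upper: "l powr (a + 3/2) * \<bar>F l\<bar> \<le> K * M" if "l \<ge> x0" for l
    unfolding F_scaled using upper[OF that] \<open>K > 0\<close> by simp
  have F_lower: "\<exists>l. s \<le> l \<and> l < s + 1 \<and> K * m \<le> l powr (a + 3/2) * \<bar>F l\<bar>" if "s \<ge> x0" for s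
    unfolding F_scaled using lower[OF that] \<open>K > 0\<close> by auto
  have "a \<ge> -1/2" "a + 3/2 \<ge> 0" "K * m > 0"
    using assms \<open>K > 0\<close> \<open>m > 0\<close> by simp_all
  then have "amalgam_norm_finite a q F \<longleftrightarrow> 2 * a + 1 - (a + 3/2) * q < -1"
    using amalgam_norm_finite_iff_power_decay[OF _ \<open>q > 0\<close> _ _ bdd F_upper F_lower] by blast
  also have "\<dots> \<longleftrightarrow> q > 2 * (a + 1) / (a + 3/2)"
    using assms by (simp add: divide_less_eq algebra_simps)
  finally show ?thesis
    unfolding F_def .
qed

theorem mainTheorem10:
  fixes a q :: real
  assumes "a \<ge> 1/2" and "1 \<le> q"
  shows "(amalgam_norm_finite a q (bk_fourier a (indicator {0..<1}))
            \<longleftrightarrow> q > 2 * (a + 1) / (a + 3/2))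
         \<and> bk_fourier a (indicator {0..<1}) \<in> amalgam_space a 2"
proof -
  have "a > -1/2"
    using assms by simp
  moreover have "2 * (a + 1) / (a + 3/2) < 2"
    using assms by (simp add: divide_less_eq)
  moreover have "bk_fourier a (indicator {0..<1}) \<in> borel_measurable borel"
    using continuous_on_bk_fourier_indicator[OF \<open>a > -1/2\<close>] by (rule borel_measurable_continuous_onI)
  ultimately show ?thesis
    using amalgam_norm_finite_bk_fourier_indicator assms unfolding amalgam_space_def by auto
qed

end
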